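(* Under the hypotheses of the Main Lemma (in particular hypotheses 1–3), define $\alpha_{xy}:=\sum_m u_x(m)u_y(m)$, $\alpha_x:=\sum_y p(y|x)\alpha_{xy}$, $\alpha_y:=\sum_x p(x|y)\alpha_{xy}$, $v_x(m):=\sum_y p(y|x)u_y(m)$, $v_y(m):=\sum_x p(x|y)u_x(m)$, $\Delta:=\frac{c/\varepsilon+1}{\varepsilon}+2$, and let $M_{xy},M_x,M_y$ denote $M$ conditioned on $XY=xy$, on $X=x$, on $Y=y$ respectively. Let $G_1:=\{(x,y): |1-\alpha_{xy}/q|\le1/2,\ |1-\alpha_x/q|\le1/2,\ |1-\alpha_y/q|\le1/2\}$, $G_2:=\{(x,y): S(M_{xy}\|M_x)+S(M_{xy}\|M_y)\le c/\varepsilon\}$, $G:=\{(x,y):\Pr_{m\leftarrow M_{xy}}[u_y(m)/v_x(m)\le2^{\Delta}\text{ and }u_x(m)/v_y(m)\le2^{\Delta}]\ge1-2\varepsilon\}$. Then (1) $\Pr_{(x,y)\leftarrow p}[(x,y)\in G_1]>1-6\varepsilon$; (2) $\Pr_{(x,y)\leftarrow p}[(x,y)\in G_2]\ge1-3\varepsilon/2$; (3) $\Pr_{(x,y)\leftarrow p}[(x,y)\in G_1\cap G_2]\ge1-15\varepsilon/2$; (4) $G_1\cap G_2\subseteq G$.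
   Context: Main Lemma hypotheses: $c\ge1$, $0<\varepsilon<1/3$, $p$ a distribution on finite $\mathcal{X}\times\mathcal{Y}$, $XYM$ jointly distributed on $\mathcal{X}\times\mathcal{Y}\times\mathcal{M}$ ($\mathcal{M}$ finite), functions $u_x,u_y:\mathcal{M}\to[0,1]$, with (1) $\Pr[XYM=xym]=\frac1q p(x,y)u_x(m)u_y(m)$ where $q:=\sum_{x,y,m}p(x,y)u_x(m)u_y(m)>0$; (2) $S(XY\|p)\le\varepsilon^2/4$; (3) $I(X:M\mid Y)+I(Y:M\mid X)\le c$. Here $p(y|x),p(x|y)$ are conditional probabilities under $p$; $S$ is relative entropy and $I$ conditional mutual information (base 2). *)

theory Defs
  imports Complex_Main
begin

definition relent :: "('a::finite \<Rightarrow> real) \<Rightarrow> ('a \<Rightarrow> real) \<Rightarrow> real" where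
  "relent P Q = (\<Sum>a\<in>UNIV. if P a = 0 then 0 else P a * log 2 (P a / Q a))"

definition pXY :: "('x::finite \<Rightarrow> 'y::finite \<Rightarrow> 'm::finite \<Rightarrow> real) \<Rightarrow> 'x \<Rightarrow> 'y \<Rightarrow> real" where
  "pXY P x y = (\<Sum>m\<in>UNIV. P x y m)"
definition pX :: "('x::finite \<Rightarrow> 'y::finite \<Rightarrow> 'm::finite \<Rightarrow> real) \<Rightarrow> 'x \<Rightarrow> real" where
  "pX P x = (\<Sum>y\<in>UNIV. \<Sum>m\<in>UNIV. P x y m)"
definition pY :: "('x::finite \<Rightarrow> 'y::finite \<Rightarrow> 'm::finite \<Rightarrow> real) \<Rightarrow> 'y \<Rightarrow> real" where
  "pY P y = (\<Sum>x\<in>UNIV. \<Sum>m\<in>UNIV. P x y m)"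
definition pXM :: "('x::finite \<Rightarrow> 'y::finite \<Rightarrow> 'm::finite \<Rightarrow> real) \<Rightarrow> 'x \<Rightarrow> 'm \<Rightarrow> real" where
  "pXM P x m = (\<Sum>y\<in>UNIV. P x y m)"
definition pYM :: "('x::finite \<Rightarrow> 'y::finite \<Rightarrow> 'm::finite \<Rightarrow> real) \<Rightarrow> 'y \<Rightarrow> 'm \<Rightarrow> real" where
  "pYM P y m = (\<Sum>x\<in>UNIV. P x y m)"

definition cmi_XM_Y :: "('x::finite \<Rightarrow> 'y::finite \<Rightarrow> 'm::finite \<Rightarrow> real) \<Rightarrow> real" where
  "cmi_XM_Y P = (\<Sum>x\<in>UNIV. \<Sum>y\<in>UNIV. \<Sum>m\<in>UNIV.
     if P x y m = 0 then 0
     else P x y m * log 2 ((P x y m * pY P y) / (pXY P x y * pYM P y m)))"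
definition cmi_YM_X :: "('x::finite \<Rightarrow> 'y::finite \<Rightarrow> 'm::finite \<Rightarrow> real) \<Rightarrow> real" where
  "cmi_YM_X P = (\<Sum>x\<in>UNIV. \<Sum>y\<in>UNIV. \<Sum>m\<in>UNIV.
     if P x y m = 0 then 0
     else P x y m * log 2 ((P x y m * pX P x) / (pXY P x y * pXM P x m)))"

definition margX :: "('x::finite \<Rightarrow> 'y::finite \<Rightarrow> real) \<Rightarrow> 'x \<Rightarrow> real" where
  "margX p x = (\<Sum>y\<in>UNIV. p x y)"
definition margY :: "('x::finite \<Rightarrow> 'y::finite \<Rightarrow> real) \<Rightarrow> 'y \<Rightarrow> real" where
  "margY p y = (\<Sum>x\<in>UNIV. p x y)"
definition cond_y_x :: "('x::finite \<Rightarrow> 'y::finite \<Rightarrow> real) \<Rightarrow> 'x \<Rightarrow> 'y \<Rightarrow> real" where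
  "cond_y_x p x y = p x y / margX p x"
definition cond_x_y :: "('x::finite \<Rightarrow> 'y::finite \<Rightarrow> real) \<Rightarrow> 'y \<Rightarrow> 'x \<Rightarrow> real" where
  "cond_x_y p y x = p x y / margY p y"

end

theory Submission
  imports Defs
begin

text \<open>
  The joint distribution of \<open>XYM\<close> has density \<open>p(x,y) u\<^sub>x(m) u\<^sub>y(m) / q\<close>, so all of its
  marginals and conditionals have closed forms: \<open>P(x,y) = p(x,y) \<alpha>\<^sub>x\<^sub>y / q\<close>,
  \<open>P(x) = p(x) \<alpha>\<^sub>x / q\<close>, \<open>P(y) = p(y) \<alpha>\<^sub>y / q\<close>, \<open>M\<^sub>x\<^sub>y \<propto> u\<^sub>x u\<^sub>y\<close>, \<open>M\<^sub>x \<propto> u\<^sub>x v\<^sub>x\<close>, \<open>M\<^sub>y \<propto> u\<^sub>y v\<^sub>y\<close>.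

  There, claim (1) holds because each of
  the three normalization conditions of \<open>G\<^sub>1\<close> fails only on \<open>p\<close>-mass at most
  \<open>2\<parallel>P\<^sub>X\<^sub>Y - p\<parallel>\<^sub>1 < 2\<epsilon>\<close>; claim (2) is Markov's inequality for the chain rule plus the
  \<open>\<ell>\<^sub>1\<close> bound; claim (3) is a union bound; and claim (4) applies the tail bound to
  \<open>M\<^sub>x\<^sub>y\<close> against \<open>M\<^sub>x\<close> and against \<open>M\<^sub>y\<close>.
\<close>

lemma ln_ge_one_minus_inverse: "0 < x \<Longrightarrow> 1 - 1 / x \<le> ln (x::real)"
  using ln_le_minus_one[of "1 / x"] by (simp add: ln_div)

text \<open>The four pointwise estimates behind Gibbs' inequality, the tail bound and the
  Pinsker-type bound: each bounds one summand \<open>p ln (p/q)\<close> of a relative entropy.\<close>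

lemma gibbs_term: "0 < (p::real) \<Longrightarrow> 0 < q \<Longrightarrow> p - q \<le> p * ln (p / q)"
  using ln_ge_one_minus_inverse[of "p / q"] mult_left_mono[of _ _ p]
  by (fastforce simp: algebra_simps)

lemma tail_term: "0 < (p::real) \<Longrightarrow> 0 < q \<Longrightarrow> - q / 2 \<le> p * ln (p / q)"
proof -
  assume p: "0 < p" and q: "0 < q"
  have "1 - q / (2 * p) \<le> ln 2 + ln (p / q)"
    using ln_ge_one_minus_inverse[of "2 * p / q"] ln_mult[of 2 "p / q"] p q by simp
  hence "- q / (2 * p) \<le> ln (p / q)" using ln_2_less_1 by linarith
  hence "p * (- q / (2 * p)) \<le> p * ln (p / q)" using p by (intro mult_left_mono) auto
  thus ?thesis using p by simp
qed

lemma hellinger_term: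
  "0 < (s::real) \<Longrightarrow> 0 < r \<Longrightarrow> 2 * s\<^sup>2 - 2 * s * r \<le> s\<^sup>2 * ln (s\<^sup>2 / r\<^sup>2)"
proof -
  assume s: "0 < s" and r: "0 < r"
  have "ln (s\<^sup>2 / r\<^sup>2) = 2 * ln (s / r)"
    using ln_realpow[of "s / r" 2] s r by (simp add: power_divide)
  hence "2 * (1 - r / s) \<le> ln (s\<^sup>2 / r\<^sup>2)"
    using ln_ge_one_minus_inverse[of "s / r"] s r by simp
  hence "s\<^sup>2 * (2 * (1 - r / s)) \<le> s\<^sup>2 * ln (s\<^sup>2 / r\<^sup>2)" by (intro mult_left_mono) auto
  thus ?thesis using s by (simp add: algebra_simps power2_eq_square)
qed

text \<open>AM-GM with a free parameter \<open>l\<close>, the final ingredient of the Pinsker-type bound.\<close>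
lemma abs_square_diff_le:
  fixes l s r :: real
  assumes l: "0 < l" and s: "0 \<le> s" and r: "0 \<le> r"
  shows "\<bar>s\<^sup>2 - r\<^sup>2\<bar> \<le> (l * (s - r)\<^sup>2 + 2 * (s\<^sup>2 + r\<^sup>2) / l) / 2"
proof -
  have "s\<^sup>2 - r\<^sup>2 = (s - r) * (s + r)" by (simp add: power2_eq_square algebra_simps)
  hence factor: "\<bar>s\<^sup>2 - r\<^sup>2\<bar> = \<bar>s - r\<bar> * (s + r)" using s r by (simp add: abs_mult)
  have "2 * l * (\<bar>s - r\<bar> * (s + r)) \<le> l\<^sup>2 * (s - r)\<^sup>2 + (s + r)\<^sup>2"
    using zero_le_power2[of "l * \<bar>s - r\<bar> - (s + r)"]
    by (simp add: power2_diff algebra_simps)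
  also have "(s + r)\<^sup>2 \<le> 2 * (s\<^sup>2 + r\<^sup>2)"
    using zero_le_power2[of "s - r"] by (simp add: power2_eq_square algebra_simps)
  finally have "2 * l * \<bar>s\<^sup>2 - r\<^sup>2\<bar> \<le> l\<^sup>2 * (s - r)\<^sup>2 + 2 * (s\<^sup>2 + r\<^sup>2)"
    unfolding factor by simp
  thus ?thesis using l by (simp add: field_simps power2_eq_square)
qed

section \<open>Relative entropy of finite distributions\<close>

definition is_distribution :: "('a::finite \<Rightarrow> real) \<Rightarrow> bool" where
  "is_distribution P \<longleftrightarrow> (\<forall>a. 0 \<le> P a) \<and> sum P UNIV = 1"

lemma relent_nats:
  "relent P Q * ln 2 = (\<Sum>a\<in>UNIV. if P a = 0 then 0 else P a * ln (P a / Q a))"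
  unfolding relent_def sum_distrib_right by (rule sum.cong) (auto simp: log_def)

lemma relent_nonneg:
  assumes P: "is_distribution P" and Q: "is_distribution Q"
    and dom: "\<forall>a. 0 < P a \<longrightarrow> 0 < Q a"
  shows "0 \<le> relent P Q"
proof -
  have "(\<Sum>a\<in>UNIV. P a - Q a) \<le> (\<Sum>a\<in>UNIV. if P a = 0 then 0 else P a * ln (P a / Q a))"
  proof (rule sum_mono)
    fix a
    show "P a - Q a \<le> (if P a = 0 then 0 else P a * ln (P a / Q a))"
      using P Q dom gibbs_term[of "P a" "Q a"]
      by (cases "P a = 0") (auto simp: is_distribution_def order_less_le)
  qed
  hence "0 \<le> relent P Q * ln 2"
    using P Q unfolding relent_nats is_distribution_def by (simp add: sum_subtractf)
  thus ?thesis by (simp add: zero_le_mult_iff)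
qed

lemma relent_tail:
  assumes P: "is_distribution P" and Q: "is_distribution Q"
    and dom: "\<forall>a. 0 < P a \<longrightarrow> 0 < Q a"
    and ratio: "\<forall>a\<in>A. 0 < P a \<longrightarrow> 2 powr t \<le> P a / Q a"
  shows "t * sum P A \<le> relent P Q + 1"
proof -
  have "(\<Sum>a\<in>UNIV. (if a \<in> A then t * P a else 0) - Q a)
      \<le> (\<Sum>a\<in>UNIV. if P a = 0 then 0 else P a * log 2 (P a / Q a))"
  proof (rule sum_mono)
    fix a
    show "(if a \<in> A then t * P a else 0) - Q a \<le> (if P a = 0 then 0 else P a * log 2 (P a / Q a))"
    proof (cases "P a = 0")
      case True thus ?thesis using Q by (auto simp: is_distribution_def)
    next
      case False
      hence p: "0 < P a" and q: "0 < Q a" using P dom by (auto simp: is_distribution_def order_less_le)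
      show ?thesis
      proof (cases "a \<in> A")
        case True
        hence "t \<le> log 2 (P a / Q a)" using ratio p q by (simp add: le_log_iff)
        hence "P a * t \<le> P a * log 2 (P a / Q a)" using p by (intro mult_left_mono) auto
        thus ?thesis using True False q by (simp add: mult.commute)
      next
        case notA: False
        have "- Q a / 2 / ln 2 \<le> P a * ln (P a / Q a) / ln 2"
          using tail_term[OF p q] by (intro divide_right_mono) auto
        moreover have "- Q a \<le> - Q a / 2 / ln 2"
          using ln_ge_one_minus_inverse[of 2] q ln_2_less_1 by (simp add: field_simps)
        ultimately show ?thesis using notA False by (simp add: log_def)
      qed
    qed
  qed
  moreover have "(\<Sum>a\<in>UNIV. (if a \<in> A then t * P a else 0)) = t * sum P A"
    by (simp add: sum.If_cases sum_distrib_left)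
  ultimately show ?thesis
    using Q unfolding relent_def is_distribution_def by (simp add: sum_subtractf)
qed

text \<open>A Pinsker-type inequality: for every \<open>l > 0\<close> the \<open>\<ell>\<^sub>1\<close>-distance is at most
  \<open>(l S(P\<parallel>Q) ln 2 + 4/l) / 2\<close>; it follows summand by summand from the Hellinger
  estimate and the AM-GM bound above.\<close>
lemma l1_le_relent:
  assumes P: "is_distribution P" and Q: "is_distribution Q"
    and dom: "\<forall>a. 0 < P a \<longrightarrow> 0 < Q a" and l: "0 < l"
  shows "(\<Sum>a\<in>UNIV. \<bar>P a - Q a\<bar>) \<le> (l * (relent P Q * ln 2) + 4 / l) / 2"
proof -
  let ?T = "\<lambda>a. if P a = 0 then 0 else P a * ln (P a / Q a)"
  have "(\<Sum>a\<in>UNIV. \<bar>P a - Q a\<bar>)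
      \<le> (\<Sum>a\<in>UNIV. (l * (?T a + Q a - P a) + 2 * (P a + Q a) / l) / 2)"
  proof (rule sum_mono)
    fix a
    define s r where "s = sqrt (P a)" and "r = sqrt (Q a)"
    have nonneg: "0 \<le> P a" "0 \<le> Q a" using P Q by (auto simp: is_distribution_def)
    hence s: "0 \<le> s" "P a = s\<^sup>2" and r: "0 \<le> r" "Q a = r\<^sup>2" by (simp_all add: s_def r_def)
    have hell: "(s - r)\<^sup>2 \<le> ?T a + Q a - P a"
    proof (cases "P a = 0")
      case True thus ?thesis using s r by (simp add: power2_eq_square)
    next
      case False
      hence "0 < s" "0 < r" using dom s r nonneg by (auto simp: order_less_le)
      thus ?thesis using hellinger_term[of s r] False s r by (simp add: power2_diff)
    qed
    have "\<bar>P a - Q a\<bar> \<le> (l * (s - r)\<^sup>2 + 2 * (P a + Q a) / l) / 2"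
      using abs_square_diff_le[OF l s(1) r(1)] s r by simp
    also have "\<dots> \<le> (l * (?T a + Q a - P a) + 2 * (P a + Q a) / l) / 2"
      using hell l by (intro divide_right_mono add_right_mono mult_left_mono) auto
    finally show "\<bar>P a - Q a\<bar> \<le> (l * (?T a + Q a - P a) + 2 * (P a + Q a) / l) / 2" .
  qed
  also have "\<dots> = (l * (sum ?T UNIV + sum Q UNIV - sum P UNIV) + 2 * (sum P UNIV + sum Q UNIV) / l) / 2"
    by (simp add: sum_divide_distrib[symmetric] sum_distrib_left[symmetric] sum.distrib sum_subtractf)
  also have "\<dots> = (l * (relent P Q * ln 2) + 4 / l) / 2"
    using P Q relent_nats[of P Q] by (simp add: is_distribution_def)
  finally show ?thesis .
qed

text \<open>With \<open>l = 4/\<epsilon>\<close>: relative entropy at most \<open>\<epsilon>\<^sup>2/4\<close> forces \<open>\<ell>\<^sub>1\<close>-distance below \<open>\<epsilon>\<close>.\<close>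
lemma l1_lt_of_relent_le:
  assumes P: "is_distribution P" and Q: "is_distribution Q"
    and dom: "\<forall>a. 0 < P a \<longrightarrow> 0 < Q a"
    and eps: "0 < \<epsilon>" and small: "relent P Q \<le> \<epsilon>\<^sup>2 / 4"
  shows "(\<Sum>a\<in>UNIV. \<bar>P a - Q a\<bar>) < \<epsilon>"
proof -
  have "4 / \<epsilon> * (relent P Q * ln 2) \<le> 4 / \<epsilon> * (\<epsilon>\<^sup>2 / 4 * ln 2)"
    using small eps by (intro mult_left_mono mult_right_mono) auto
  also have "\<dots> = \<epsilon> * ln 2" using eps by (simp add: power2_eq_square)
  also have "\<dots> < \<epsilon>" using eps ln_2_less_1 by simp
  finally have "(4 / \<epsilon> * (relent P Q * ln 2) + 4 / (4 / \<epsilon>)) / 2 < \<epsilon>" by simp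
  thus ?thesis using l1_le_relent[OF P Q dom, of "4 / \<epsilon>"] eps by simp
qed

text \<open>One half of the pointwise estimate of the Main Lemma, for densities of product form:
  if \<open>R \<propto> a b\<close> and \<open>Q \<propto> a v\<close> with normalizing constants \<open>A \<le> 3 B\<close>, then
  \<open>R/Q \<ge> (b/v)/3\<close>, so the set where \<open>b/v > 2\<^sup>t\<^sup>+\<^sup>2\<close> has \<open>R\<close>-mass at most \<open>(S(R\<parallel>Q) + 1)/t\<close>.\<close>
lemma product_density_tail:
  fixes R Q a b v :: "'a::finite \<Rightarrow> real" and A B t :: real
  assumes R: "is_distribution R" and Q: "is_distribution Q"
    and dom: "\<forall>m. 0 < R m \<longrightarrow> 0 < Q m"
    and R_eq: "\<forall>m. R m = a m * b m / A" and Q_eq: "\<forall>m. Q m = a m * v m / B"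
    and nonneg: "\<forall>m. 0 \<le> a m \<and> 0 \<le> b m \<and> 0 \<le> v m"
    and A: "0 < A" and AB: "A \<le> 3 * B"
  shows "t * sum R {m. \<not> b m / v m \<le> 2 powr (t + 2)} \<le> relent R Q + 1"
proof (rule relent_tail[OF R Q dom], intro ballI impI)
  fix m assume big: "m \<in> {m. \<not> b m / v m \<le> 2 powr (t + 2)}" and Rpos: "0 < R m"
  have B: "0 < B" using A AB by linarith
  have "0 < a m * b m" using Rpos A R_eq by (simp add: zero_less_divide_iff)
  hence a: "0 < a m" and b: "0 < b m" using nonneg by (auto simp: zero_less_mult_iff order_less_le)
  have v: "0 < v m" using big nonneg by (auto simp: order_less_le)
  have "R m / Q m = (b m / v m) * (B / A)"
    using a v A B by (simp add: R_eq Q_eq field_simps)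
  moreover have "1 / 3 \<le> B / A" using A AB by (simp add: field_simps)
  ultimately have third: "(b m / v m) * (1 / 3) \<le> R m / Q m"
    using b v by (metis mult_left_mono less_eq_real_def divide_pos_pos)
  have "4 * 2 powr t < b m / v m" using big by (simp add: powr_add)
  thus "2 powr t \<le> R m / Q m" using third powr_ge_zero[of 2 t] by argo
qed

lemma sum_Un_le:
  fixes w :: "'a::finite \<Rightarrow> real"
  assumes "\<forall>a. 0 \<le> w a"
  shows "sum w (A \<union> B) \<le> sum w A + sum w B"
  using sum_Un[of A B w] sum_nonneg[of "A \<inter> B" w] assms by simp

lemma sum_UNIV_split:
  fixes f :: "'a::finite \<Rightarrow> 'b::comm_monoid_add"
  shows "sum f UNIV = sum f A + sum f (- A)"
  using sum.union_disjoint[of A "- A" f] by (simp add: Compl_partition)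

lemma sum_ge_total_minus_exceptions:
  fixes w :: "'a::finite \<Rightarrow> real"
  assumes w: "\<forall>a. 0 \<le> w a" and cover: "\<forall>a. 0 < w a \<longrightarrow> a \<notin> B \<longrightarrow> a \<in> A"
  shows "sum w UNIV - sum w B \<le> sum w A"
proof -
  have "sum w UNIV = sum w (-B) + sum w B" using sum_UNIV_split[of w B] by simp
  also have "sum w (-B) \<le> sum w A"
  proof -
    have "sum w (-B) = sum w (-B \<inter> {a. 0 < w a})"
      using w by (intro sum.mono_neutral_right) (auto simp: order_less_le)
    also have "\<dots> \<le> sum w A" using w cover by (intro sum_mono2) auto
    finally show ?thesis .
  qed
  finally show ?thesis by simp
qed

lemma mass_diff_le_half_l1:
  fixes P Q :: "'a::finite \<Rightarrow> real"
  assumes total: "sum P UNIV = sum Q UNIV"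
  shows "\<bar>sum P A - sum Q A\<bar> \<le> (\<Sum>a\<in>UNIV. \<bar>P a - Q a\<bar>) / 2"
proof -
  let ?d = "\<lambda>a. P a - Q a"
  have split: "sum ?d A + sum ?d (-A) = 0"
    using total sum_UNIV_split[of ?d A] by (simp add: sum_subtractf)
  have "\<bar>sum ?d A\<bar> + \<bar>sum ?d (-A)\<bar> \<le> sum (\<lambda>a. \<bar>?d a\<bar>) A + sum (\<lambda>a. \<bar>?d a\<bar>) (-A)"
    by (intro add_mono sum_abs)
  also have "\<dots> = (\<Sum>a\<in>UNIV. \<bar>P a - Q a\<bar>)" by (rule sum_UNIV_split[symmetric])
  moreover have "\<bar>sum ?d (-A)\<bar> = \<bar>sum ?d A\<bar>" using split by (simp add: add_eq_0_iff)
  ultimately show ?thesis by (simp add: sum_subtractf)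
qed

lemma mass_of_distorted_points:
  fixes w w' r :: "'a::finite \<Rightarrow> real"
  assumes w: "\<forall>a. 0 \<le> w a" and w': "\<forall>a. w' a = w a * r a"
  shows "sum w {a. \<not> \<bar>1 - r a\<bar> \<le> 1/2} \<le> 2 * (\<Sum>a\<in>UNIV. \<bar>w' a - w a\<bar>)"
proof -
  have "sum w {a. \<not> \<bar>1 - r a\<bar> \<le> 1/2} \<le> sum (\<lambda>a. 2 * \<bar>w' a - w a\<bar>) {a. \<not> \<bar>1 - r a\<bar> \<le> 1/2}"
  proof (rule sum_mono)
    fix a assume "a \<in> {a. \<not> \<bar>1 - r a\<bar> \<le> 1/2}"
    hence "w a * (1/2) \<le> w a * \<bar>1 - r a\<bar>" using w by (intro mult_left_mono) auto
    also have "\<dots> = \<bar>w' a - w a\<bar>"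
    proof -
      have "w' a - w a = w a * (r a - 1)" using w' by (simp add: algebra_simps)
      thus ?thesis using w by (simp add: abs_mult abs_minus_commute)
    qed
    finally show "w a \<le> 2 * \<bar>w' a - w a\<bar>" by simp
  qed
  also have "\<dots> \<le> (\<Sum>a\<in>UNIV. 2 * \<bar>w' a - w a\<bar>)" by (intro sum_mono2) auto
  finally show ?thesis by (simp add: sum_distrib_left)
qed

lemma weighted_markov:
  fixes w f :: "'a::finite \<Rightarrow> real"
  assumes w: "\<forall>a. 0 \<le> w a" and f: "\<forall>a. 0 < w a \<longrightarrow> 0 \<le> f a"
    and big: "\<forall>a\<in>A. 0 < w a \<longrightarrow> k \<le> f a"
  shows "k * sum w A \<le> (\<Sum>a\<in>UNIV. w a * f a)"
proof -
  have "(\<Sum>a\<in>UNIV. if a \<in> A then k * w a else 0) \<le> (\<Sum>a\<in>UNIV. w a * f a)"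
  proof (rule sum_mono)
    fix a
    show "(if a \<in> A then k * w a else 0) \<le> w a * f a"
      using w f big mult_left_mono[of k "f a" "w a"]
      by (cases "w a = 0") (auto simp: order_less_le mult.commute)
  qed
  thus ?thesis by (simp add: sum.If_cases sum_distrib_left)
qed

lemma sum_UNIV_pairs:
  "(\<Sum>z\<in>(UNIV::('a::finite \<times> 'b::finite) set). h z) = (\<Sum>x\<in>UNIV. \<Sum>y\<in>UNIV. h (x, y))"
  by (simp add: sum.cartesian_product)

lemma l1_marginal_fst:
  fixes f g :: "'a::finite \<Rightarrow> 'b::finite \<Rightarrow> real"
  shows "(\<Sum>x\<in>UNIV. \<bar>(\<Sum>y\<in>UNIV. f x y) - (\<Sum>y\<in>UNIV. g x y)\<bar>)
    \<le> (\<Sum>z\<in>UNIV. \<bar>case_prod f z - case_prod g z\<bar>)"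
  unfolding sum_UNIV_pairs sum_subtractf[symmetric] by (intro sum_mono) simp

lemma l1_marginal_snd:
  fixes f g :: "'a::finite \<Rightarrow> 'b::finite \<Rightarrow> real"
  shows "(\<Sum>y\<in>UNIV. \<bar>(\<Sum>x\<in>UNIV. f x y) - (\<Sum>x\<in>UNIV. g x y)\<bar>)
    \<le> (\<Sum>z\<in>UNIV. \<bar>case_prod f z - case_prod g z\<bar>)"
  using l1_marginal_fst[of "\<lambda>y x. f x y" "\<lambda>y x. g x y"]
  unfolding sum_UNIV_pairs by (subst sum.swap) simp

section \<open>Conditional distributions and the chain rule\<close>

text \<open>Normalizing \<open>f \<le> g\<close> yields two distributions, the first dominated by the second;
  this is how \<open>M\<^sub>x\<^sub>y\<close> relates to \<open>M\<^sub>x\<close> and \<open>M\<^sub>y\<close>.\<close>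
lemma normalize_dominated:
  fixes f g :: "'a::finite \<Rightarrow> real"
  assumes fg: "\<forall>a. 0 \<le> f a \<and> f a \<le> g a" and pos: "0 < sum f UNIV"
  shows "is_distribution (\<lambda>a. f a / sum f UNIV)" "is_distribution (\<lambda>a. g a / sum g UNIV)"
    "\<forall>a. 0 < f a / sum f UNIV \<longrightarrow> 0 < g a / sum g UNIV"
proof -
  have "sum f UNIV \<le> sum g UNIV" using fg by (intro sum_mono) auto
  hence gpos: "0 < sum g UNIV" using pos by linarith
  have g: "0 \<le> g a" for a using fg order_trans[of 0 "f a" "g a"] by blast
  show "is_distribution (\<lambda>a. f a / sum f UNIV)" "is_distribution (\<lambda>a. g a / sum g UNIV)"
    using fg g pos gpos by (auto simp: is_distribution_def sum_divide_distrib[symmetric])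
  show "\<forall>a. 0 < f a / sum f UNIV \<longrightarrow> 0 < g a / sum g UNIV"
    using fg pos gpos by (auto simp: zero_less_divide_iff intro: less_le_trans)
qed

text \<open>A summand of a conditional mutual information, written as a weighted relative
  entropy of normalized distributions.\<close>
lemma scaled_relent:
  fixes f g :: "'a::finite \<Rightarrow> real"
  assumes f: "\<forall>a. 0 \<le> f a"
  shows "sum f UNIV * relent (\<lambda>a. f a / sum f UNIV) (\<lambda>a. g a / t)
       = (\<Sum>a\<in>UNIV. if f a = 0 then 0 else f a * log 2 (f a * t / (sum f UNIV * g a)))"
proof (cases "sum f UNIV = 0")
  case True
  hence "\<forall>a. f a = 0" using f sum_nonneg_eq_0_iff[of UNIV f] by simp
  thus ?thesis by simp
next
  case False
  thus ?thesis unfolding relent_def sum_distrib_left by (intro sum.cong) auto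
qed

lemma cmi_YM_X_chain:
  assumes "\<forall>x y m. 0 \<le> P x y m"
  shows "cmi_YM_X P = (\<Sum>x\<in>UNIV. \<Sum>y\<in>UNIV.
      pXY P x y * relent (\<lambda>m. P x y m / pXY P x y) (\<lambda>m. pXM P x m / pX P x))"
  unfolding cmi_YM_X_def pXY_def using assms by (simp add: scaled_relent)

lemma cmi_XM_Y_chain:
  assumes "\<forall>x y m. 0 \<le> P x y m"
  shows "cmi_XM_Y P = (\<Sum>x\<in>UNIV. \<Sum>y\<in>UNIV.
      pXY P x y * relent (\<lambda>m. P x y m / pXY P x y) (\<lambda>m. pYM P y m / pY P y))"
  unfolding cmi_XM_Y_def pXY_def using assms by (simp add: scaled_relent)

lemma margX_times_cond_avg:
  assumes p: "\<forall>x y. 0 \<le> p x y"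
  shows "margX p x * (\<Sum>y\<in>UNIV. cond_y_x p x y * h y) = (\<Sum>y\<in>UNIV. p x y * h y)"
proof (cases "margX p x = 0")
  case True
  hence "\<forall>y. p x y = 0" using p sum_nonneg_eq_0_iff[of UNIV "p x"] by (simp add: margX_def)
  thus ?thesis using True by simp
next
  case False
  thus ?thesis unfolding cond_y_x_def sum_distrib_left by (intro sum.cong) auto
qed

lemma margY_times_cond_avg:
  assumes p: "\<forall>x y. 0 \<le> p x y"
  shows "margY p y * (\<Sum>x\<in>UNIV. cond_x_y p y x * h x) = (\<Sum>x\<in>UNIV. p x y * h x)"
proof (cases "margY p y = 0")
  case True
  hence "\<forall>x. p x y = 0" using p sum_nonneg_eq_0_iff[of UNIV "\<lambda>x. p x y"] by (simp add: margY_def)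
  thus ?thesis using True by simp
next
  case False
  thus ?thesis unfolding cond_x_y_def sum_distrib_left by (intro sum.cong) auto
qed

locale main_lemma =
  fixes p :: "'x::finite \<Rightarrow> 'y::finite \<Rightarrow> real"
    and ux :: "'x \<Rightarrow> 'm::finite \<Rightarrow> real" and uy :: "'y \<Rightarrow> 'm \<Rightarrow> real"
    and P :: "'x \<Rightarrow> 'y \<Rightarrow> 'm \<Rightarrow> real" and q c \<epsilon> :: real
  assumes p_nonneg: "\<forall>x y. 0 \<le> p x y" and p_sum: "(\<Sum>x\<in>UNIV. \<Sum>y\<in>UNIV. p x y) = 1"
    and ux_nonneg: "\<forall>x m. 0 \<le> ux x m" and uy_nonneg: "\<forall>y m. 0 \<le> uy y m"
    and q_eq: "q = (\<Sum>x\<in>UNIV. \<Sum>y\<in>UNIV. \<Sum>m\<in>UNIV. p x y * ux x m * uy y m)" and q_pos: "0 < q"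
    and P_density: "\<forall>x y m. P x y m = p x y * ux x m * uy y m / q"
    and c_pos: "0 < c" and eps_pos: "0 < \<epsilon>"
    and XY_close: "relent (\<lambda>(x, y). pXY P x y) (\<lambda>(x, y). p x y) \<le> \<epsilon>\<^sup>2 / 4"
    and cmi_le: "cmi_XM_Y P + cmi_YM_X P \<le> c"
begin

abbreviation alpha_xy :: "'x \<Rightarrow> 'y \<Rightarrow> real" where
  "alpha_xy x y \<equiv> \<Sum>m\<in>UNIV. ux x m * uy y m"
abbreviation alpha_x :: "'x \<Rightarrow> real" where
  "alpha_x x \<equiv> \<Sum>y\<in>UNIV. cond_y_x p x y * alpha_xy x y"
abbreviation alpha_y :: "'y \<Rightarrow> real" where
  "alpha_y y \<equiv> \<Sum>x\<in>UNIV. cond_x_y p y x * alpha_xy x y"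
abbreviation v_x :: "'x \<Rightarrow> 'm \<Rightarrow> real" where
  "v_x x m \<equiv> \<Sum>y\<in>UNIV. cond_y_x p x y * uy y m"
abbreviation v_y :: "'y \<Rightarrow> 'm \<Rightarrow> real" where
  "v_y y m \<equiv> \<Sum>x\<in>UNIV. cond_x_y p y x * ux x m"
abbreviation M_xy :: "'x \<Rightarrow> 'y \<Rightarrow> 'm \<Rightarrow> real" where
  "M_xy x y m \<equiv> P x y m / pXY P x y"
abbreviation M_x :: "'x \<Rightarrow> 'm \<Rightarrow> real" where
  "M_x x m \<equiv> pXM P x m / pX P x"
abbreviation M_y :: "'y \<Rightarrow> 'm \<Rightarrow> real" where
  "M_y y m \<equiv> pYM P y m / pY P y"
abbreviation Delta :: real where
  "Delta \<equiv> (c / \<epsilon> + 1) / \<epsilon> + 2"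
abbreviation good1 :: "('x \<times> 'y) set" where
  "good1 \<equiv> {(x, y). p x y > 0 \<and> \<bar>1 - alpha_xy x y / q\<bar> \<le> 1/2
                  \<and> \<bar>1 - alpha_x x / q\<bar> \<le> 1/2 \<and> \<bar>1 - alpha_y y / q\<bar> \<le> 1/2}"
abbreviation good2 :: "('x \<times> 'y) set" where
  "good2 \<equiv> {(x, y). p x y > 0 \<and> relent (M_xy x y) (M_x x) + relent (M_xy x y) (M_y y) \<le> c / \<epsilon>}"
abbreviation good :: "('x \<times> 'y) set" where
  "good \<equiv> {(x, y). p x y > 0 \<and>
     (\<Sum>m\<in>{m. uy y m / v_x x m \<le> 2 powr Delta \<and> ux x m / v_y y m \<le> 2 powr Delta}. M_xy x y m)
       \<ge> 1 - 2 * \<epsilon>}"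

abbreviation l1_XY :: real where
  "l1_XY \<equiv> \<Sum>z\<in>UNIV. \<bar>case_prod (pXY P) z - case_prod p z\<bar>"

lemma P_eq: "P x y m = p x y * ux x m * uy y m / q"
  using P_density by simp

lemma P_nonneg: "0 \<le> P x y m"
  using p_nonneg ux_nonneg uy_nonneg q_pos by (simp add: P_eq)

lemma pXY_eq: "pXY P x y = p x y * alpha_xy x y / q"
  unfolding pXY_def P_eq by (simp add: sum_divide_distrib[symmetric] sum_distrib_left mult.assoc)

lemma pX_eq: "pX P x = margX p x * alpha_x x / q"
  unfolding margX_times_cond_avg[OF p_nonneg]
  by (simp add: pX_def pXY_def[symmetric] pXY_eq sum_divide_distrib)

lemma pY_eq: "pY P y = margY p y * alpha_y y / q"
  unfolding margY_times_cond_avg[OF p_nonneg]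
  by (simp add: pY_def pXY_def[symmetric] pXY_eq sum_divide_distrib)

lemma pXM_eq: "pXM P x m = ux x m * (margX p x * v_x x m) / q"
  unfolding margX_times_cond_avg[OF p_nonneg] pXM_def P_eq
  by (simp add: sum_divide_distrib sum_distrib_left algebra_simps)

lemma pYM_eq: "pYM P y m = uy y m * (margY p y * v_y y m) / q"
  unfolding margY_times_cond_avg[OF p_nonneg] pYM_def P_eq
  by (simp add: sum_divide_distrib sum_distrib_left algebra_simps)

lemma XY_distributions:
  "is_distribution (\<lambda>(x, y). pXY P x y)" "is_distribution (\<lambda>(x, y). p x y)"
  "\<forall>z. 0 < (\<lambda>(x, y). pXY P x y) z \<longrightarrow> 0 < (\<lambda>(x, y). p x y) z"
proof -
  have "q = (\<Sum>x\<in>UNIV. \<Sum>y\<in>UNIV. p x y * alpha_xy x y)"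
    unfolding q_eq by (simp add: sum_distrib_left mult.assoc)
  hence "(\<Sum>x\<in>UNIV. \<Sum>y\<in>UNIV. pXY P x y) = 1"
    using q_pos by (simp add: pXY_eq sum_divide_distrib[symmetric])
  moreover have "0 \<le> pXY P x y" for x y by (simp add: pXY_def P_nonneg sum_nonneg)
  ultimately show "is_distribution (\<lambda>(x, y). pXY P x y)" "is_distribution (\<lambda>(x, y). p x y)"
    using p_nonneg p_sum by (auto simp: is_distribution_def sum_UNIV_pairs)
  show "\<forall>z. 0 < (\<lambda>(x, y). pXY P x y) z \<longrightarrow> 0 < (\<lambda>(x, y). p x y) z"
    using p_nonneg by (auto simp: pXY_eq order_less_le)
qed

lemma l1_XY_small: "l1_XY < \<epsilon>"
  using l1_lt_of_relent_le[OF XY_distributions eps_pos XY_close] by (simp add: case_prod_beta')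

lemma conditionals:
  assumes pos: "0 < pXY P x y"
  shows "is_distribution (M_xy x y)" "is_distribution (M_x x)" "is_distribution (M_y y)"
    "\<forall>m. 0 < M_xy x y m \<longrightarrow> 0 < M_x x m" "\<forall>m. 0 < M_xy x y m \<longrightarrow> 0 < M_y y m"
proof -
  have pXY: "pXY P x y = sum (P x y) UNIV" by (simp add: pXY_def)
  have pX: "pX P x = sum (pXM P x) UNIV" unfolding pX_def pXM_def by (rule sum.swap)
  have pY: "pY P y = sum (pYM P y) UNIV" unfolding pY_def pYM_def by (rule sum.swap)
  have "\<forall>m. 0 \<le> P x y m \<and> P x y m \<le> pXM P x m" "\<forall>m. 0 \<le> P x y m \<and> P x y m \<le> pYM P y m"
    unfolding pXM_def pYM_def by (auto simp: P_nonneg intro: member_le_sum)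
  from normalize_dominated[OF this(1)] normalize_dominated[OF this(2)] pos
  show "is_distribution (M_xy x y)" "is_distribution (M_x x)" "is_distribution (M_y y)"
    "\<forall>m. 0 < M_xy x y m \<longrightarrow> 0 < M_x x m" "\<forall>m. 0 < M_xy x y m \<longrightarrow> 0 < M_y y m"
    unfolding pXY pX pY by simp_all
qed

subsection \<open>Claim (1): the normalizations are nearly right on most pairs\<close>

text \<open>Since \<open>P(x,y) = p(x,y) \<alpha>\<^sub>x\<^sub>y/q\<close>, \<open>P(x) = p(x) \<alpha>\<^sub>x/q\<close> and \<open>P(y) = p(y) \<alpha>\<^sub>y/q\<close>, each of the
  three conditions defining \<open>G\<^sub>1\<close> fails only on a set of \<open>p\<close>-mass at most \<open>2 \<parallel>P\<^sub>X\<^sub>Y - p\<parallel>\<^sub>1\<close>.\<close>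
lemma bad_alpha_xy_mass:
  "sum (\<lambda>(x, y). p x y) {(x, y). \<not> \<bar>1 - alpha_xy x y / q\<bar> \<le> 1/2} \<le> 2 * l1_XY"
  using mass_of_distorted_points[of "\<lambda>(x, y). p x y" "\<lambda>(x, y). pXY P x y"
      "\<lambda>(x, y). alpha_xy x y / q"] p_nonneg
  by (simp add: pXY_eq case_prod_beta' split_def)

lemma bad_alpha_x_mass:
  "sum (\<lambda>(x, y). p x y) {(x, y). \<not> \<bar>1 - alpha_x x / q\<bar> \<le> 1/2} \<le> 2 * l1_XY"
proof -
  let ?bad = "{x. \<not> \<bar>1 - alpha_x x / q\<bar> \<le> 1/2}"
  have set: "{(x, y). \<not> \<bar>1 - alpha_x x / q\<bar> \<le> 1/2} = ?bad \<times> UNIV" by auto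
  have "sum (\<lambda>(x, y). p x y) {(x, y). \<not> \<bar>1 - alpha_x x / q\<bar> \<le> 1/2}
      = (\<Sum>x\<in>?bad. \<Sum>y\<in>UNIV. p x y)"
    unfolding set by (rule sum.cartesian_product[symmetric])
  also have "\<dots> = sum (margX p) ?bad" by (simp add: margX_def)
  also have "\<dots> \<le> 2 * (\<Sum>x\<in>UNIV. \<bar>pX P x - margX p x\<bar>)"
    using p_nonneg by (intro mass_of_distorted_points) (auto simp: pX_eq margX_def sum_nonneg)
  also have "\<dots> \<le> 2 * l1_XY"
    using l1_marginal_fst[of "pXY P" p] by (simp add: pX_def pXY_def margX_def)
  finally show ?thesis .
qed

lemma bad_alpha_y_mass:
  "sum (\<lambda>(x, y). p x y) {(x, y). \<not> \<bar>1 - alpha_y y / q\<bar> \<le> 1/2} \<le> 2 * l1_XY"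
proof -
  let ?bad = "{y. \<not> \<bar>1 - alpha_y y / q\<bar> \<le> 1/2}"
  have set: "{(x, y). \<not> \<bar>1 - alpha_y y / q\<bar> \<le> 1/2} = UNIV \<times> ?bad" by auto
  have "sum (\<lambda>(x, y). p x y) {(x, y). \<not> \<bar>1 - alpha_y y / q\<bar> \<le> 1/2}
      = (\<Sum>x\<in>UNIV. \<Sum>y\<in>?bad. p x y)"
    unfolding set by (rule sum.cartesian_product[symmetric])
  also have "\<dots> = sum (margY p) ?bad" by (simp add: margY_def sum.swap[of _ UNIV])
  also have "\<dots> \<le> 2 * (\<Sum>y\<in>UNIV. \<bar>pY P y - margY p y\<bar>)"
    using p_nonneg by (intro mass_of_distorted_points) (auto simp: pY_eq margY_def sum_nonneg)
  also have "\<dots> \<le> 2 * l1_XY"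
    using l1_marginal_snd[of "pXY P" p] by (simp add: pY_def pXY_def margY_def)
  finally show ?thesis .
qed

lemma good1_mass: "(\<Sum>(x, y)\<in>good1. p x y) > 1 - 6 * \<epsilon>"
proof -
  let ?w = "\<lambda>(x, y). p x y"
  define Bxy Bx By :: "('x \<times> 'y) set" where
    "Bxy = {(x, y). \<not> \<bar>1 - alpha_xy x y / q\<bar> \<le> 1/2}" and
    "Bx = {(x, y). \<not> \<bar>1 - alpha_x x / q\<bar> \<le> 1/2}" and
    "By = {(x, y). \<not> \<bar>1 - alpha_y y / q\<bar> \<le> 1/2}"
  have w: "\<forall>z. 0 \<le> ?w z" using p_nonneg by auto
  have "sum ?w UNIV - sum ?w (Bxy \<union> Bx \<union> By) \<le> sum ?w good1"
    by (rule sum_ge_total_minus_exceptions[OF w]) (auto simp: Bxy_def Bx_def By_def)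
  moreover have "sum ?w (Bxy \<union> Bx \<union> By) \<le> sum ?w Bxy + sum ?w Bx + sum ?w By"
    using sum_Un_le[OF w, of "Bxy \<union> Bx" By] sum_Un_le[OF w, of Bxy Bx] by linarith
  moreover have "sum ?w UNIV = 1" using p_sum by (simp add: sum_UNIV_pairs)
  ultimately show ?thesis
    using bad_alpha_xy_mass bad_alpha_x_mass bad_alpha_y_mass l1_XY_small
    unfolding Bxy_def Bx_def By_def by linarith
qed

subsection \<open>Claim (2): \<open>M\<close> is nearly independent given \<open>X\<close> and given \<open>Y\<close> on most pairs\<close>

text \<open>The \<open>P\<^sub>X\<^sub>Y\<close>-average of \<open>S(M\<^sub>x\<^sub>y\<parallel>M\<^sub>x) + S(M\<^sub>x\<^sub>y\<parallel>M\<^sub>y)\<close> is the sum of the two conditional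
  mutual informations, hence at most \<open>c\<close>; Markov's inequality bounds the \<open>P\<^sub>X\<^sub>Y\<close>-mass
  outside \<open>G\<^sub>2\<close> by \<open>\<epsilon>\<close>.\<close>
lemma not_good2_mass_P: "sum (\<lambda>(x, y). pXY P x y) (- good2) \<le> \<epsilon>"
proof -
  let ?w = "\<lambda>(x, y). pXY P x y"
  let ?S = "\<lambda>(x, y). relent (M_xy x y) (M_x x) + relent (M_xy x y) (M_y y)"
  have relents_nonneg: "0 \<le> ?S z" if "0 < ?w z" for z
    using that conditionals[of "fst z" "snd z"]
    by (auto simp: case_prod_beta' intro!: add_nonneg_nonneg relent_nonneg)
  have "c / \<epsilon> * sum ?w (- good2) \<le> (\<Sum>z\<in>UNIV. ?w z * ?S z)"
  proof (rule weighted_markov)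
    show "\<forall>z. 0 \<le> ?w z" using XY_distributions(1) by (simp add: is_distribution_def)
    show "\<forall>z. 0 < ?w z \<longrightarrow> 0 \<le> ?S z" using relents_nonneg by blast
    show "\<forall>z\<in>- good2. 0 < ?w z \<longrightarrow> c / \<epsilon> \<le> ?S z"
      using XY_distributions(3) by fastforce
  qed
  also have "\<dots> = cmi_YM_X P + cmi_XM_Y P"
  proof -
    have P0: "\<forall>x y m. 0 \<le> P x y m" using P_nonneg by blast
    show ?thesis unfolding cmi_YM_X_chain[OF P0] cmi_XM_Y_chain[OF P0]
      by (simp add: sum_UNIV_pairs distrib_left sum.distrib)
  qed
  also have "\<dots> \<le> c / \<epsilon> * \<epsilon>" using cmi_le eps_pos by simp
  finally show ?thesis by (rule mult_left_le_imp_le) (use c_pos eps_pos in simp)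
qed

lemma good2_mass: "(\<Sum>(x, y)\<in>good2. p x y) \<ge> 1 - 3 * \<epsilon> / 2"
proof -
  let ?w = "\<lambda>(x, y). p x y" and ?w' = "\<lambda>(x, y). pXY P x y"
  have "\<bar>sum ?w' (- good2) - sum ?w (- good2)\<bar> \<le> l1_XY / 2"
    using mass_diff_le_half_l1[of ?w' ?w "- good2"] XY_distributions(1,2)
    by (simp add: is_distribution_def case_prod_beta')
  hence "sum ?w (- good2) \<le> sum ?w' (- good2) + l1_XY / 2" by arith
  moreover have "sum ?w UNIV = sum ?w good2 + sum ?w (- good2)" by (rule sum_UNIV_split)
  moreover have "sum ?w UNIV = 1" using p_sum by (simp add: sum_UNIV_pairs)
  ultimately show ?thesis using not_good2_mass_P l1_XY_small by linarith
qed

lemma good1_good2_mass: "(\<Sum>(x, y)\<in>good1 \<inter> good2. p x y) \<ge> 1 - 15 * \<epsilon> / 2"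
proof -
  let ?w = "\<lambda>(x, y). p x y"
  have "sum ?w (good1 \<union> good2) + sum ?w (good1 \<inter> good2) = sum ?w good1 + sum ?w good2"
    by (rule sum.union_inter) simp_all
  moreover have "sum ?w (good1 \<union> good2) \<le> sum ?w UNIV" using p_nonneg by (intro sum_mono2) auto
  moreover have "sum ?w UNIV = 1" using p_sum by (simp add: sum_UNIV_pairs)
  ultimately show ?thesis using good1_mass good2_mass by linarith
qed

subsection \<open>Claim (4): on \<open>G\<^sub>1 \<inter> G\<^sub>2\<close> the likelihood ratios are bounded with high probability\<close>

text \<open>On \<open>G\<^sub>1\<close> all three normalizations lie in \<open>[q/2, 3q/2]\<close>; hence \<open>\<alpha>\<^sub>x\<^sub>y > 0\<close> and
  \<open>\<alpha>\<^sub>x\<^sub>y\<close> is at most three times \<open>\<alpha>\<^sub>x\<close> and \<open>\<alpha>\<^sub>y\<close>.\<close>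
lemma good1_normalizations:
  assumes "(x, y) \<in> good1"
  shows "0 < alpha_xy x y" "alpha_xy x y \<le> 3 * alpha_x x" "alpha_xy x y \<le> 3 * alpha_y y"
proof -
  have bounds: "q / 2 \<le> a \<and> a \<le> 3 * q / 2" if "\<bar>1 - a / q\<bar> \<le> 1/2" for a
  proof -
    have "1/2 \<le> a / q" "a / q \<le> 3/2" using that unfolding abs_le_iff by linarith+
    thus ?thesis using q_pos by (simp add: field_simps)
  qed
  show "0 < alpha_xy x y" "alpha_xy x y \<le> 3 * alpha_x x" "alpha_xy x y \<le> 3 * alpha_y y"
    using assms bounds[of "alpha_xy x y"] bounds[of "alpha_x x"] bounds[of "alpha_y y"] q_pos
    by auto
qed

text \<open>On \<open>G\<^sub>1\<close> the conditionals have product form, \<open>M\<^sub>x\<^sub>y \<propto> u\<^sub>x u\<^sub>y\<close>, \<open>M\<^sub>x \<propto> u\<^sub>x v\<^sub>x\<close>,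
  \<open>M\<^sub>y \<propto> u\<^sub>y v\<^sub>y\<close>, so the tail bound applies to both likelihood ratios.\<close>
lemma conditional_tails:
  assumes good1: "(x, y) \<in> good1"
  shows "t * sum (M_xy x y) {m. \<not> uy y m / v_x x m \<le> 2 powr (t + 2)}
           \<le> relent (M_xy x y) (M_x x) + 1"
    and "t * sum (M_xy x y) {m. \<not> ux x m / v_y y m \<le> 2 powr (t + 2)}
           \<le> relent (M_xy x y) (M_y y) + 1"
proof -
  have p: "0 < p x y" using good1 by simp
  note alpha = good1_normalizations[OF good1]
  have "p x y \<le> margX p x" "p x y \<le> margY p y"
    unfolding margX_def margY_def using p_nonneg by (auto intro: member_le_sum)
  hence margs: "0 < margX p x" "0 < margY p y" using p by linarith+
  have pos: "0 < pXY P x y" using p alpha q_pos by (simp add: pXY_eq)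
  note conds = conditionals[OF pos]
  have M_xy: "\<forall>m. M_xy x y m = ux x m * uy y m / alpha_xy x y"
    using p q_pos alpha by (simp add: P_eq pXY_eq)
  have M_x: "\<forall>m. M_x x m = ux x m * v_x x m / alpha_x x"
    using margs q_pos by (simp add: pXM_eq pX_eq)
  have M_y: "\<forall>m. M_y y m = uy y m * v_y y m / alpha_y y"
    using margs q_pos by (simp add: pYM_eq pY_eq)
  have v: "0 \<le> v_x x m" "0 \<le> v_y y m" for m
    using p_nonneg ux_nonneg uy_nonneg
    by (auto simp: cond_y_x_def cond_x_y_def margX_def margY_def
        intro!: sum_nonneg divide_nonneg_nonneg mult_nonneg_nonneg)
  show "t * sum (M_xy x y) {m. \<not> uy y m / v_x x m \<le> 2 powr (t + 2)}
      \<le> relent (M_xy x y) (M_x x) + 1"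
    using conds(1,2,4) M_xy M_x v ux_nonneg uy_nonneg alpha
    by (intro product_density_tail[where a = "ux x" and A = "alpha_xy x y" and B = "alpha_x x"]) auto
  show "t * sum (M_xy x y) {m. \<not> ux x m / v_y y m \<le> 2 powr (t + 2)}
      \<le> relent (M_xy x y) (M_y y) + 1"
    using conds(1,3,5) M_xy M_y v ux_nonneg uy_nonneg alpha
    by (intro product_density_tail[where a = "uy y" and A = "alpha_xy x y" and B = "alpha_y y"])
       (auto simp: mult.commute)
qed

text \<open>With \<open>t = (c/\<epsilon> + 1)/\<epsilon>\<close> (so \<open>\<Delta> = t + 2\<close>) each relative entropy is at most \<open>c/\<epsilon>\<close> on
  \<open>G\<^sub>2\<close>, so each of the two tail sets has \<open>M\<^sub>x\<^sub>y\<close>-mass at most \<open>\<epsilon>\<close>.\<close>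
lemma good_pair:
  assumes good1: "(x, y) \<in> good1" and good2: "(x, y) \<in> good2"
  shows "(x, y) \<in> good"
proof -
  define t where "t = (c / \<epsilon> + 1) / \<epsilon>"
  let ?M = "M_xy x y"
  let ?A1 = "{m. \<not> uy y m / v_x x m \<le> 2 powr (t + 2)}"
  let ?A2 = "{m. \<not> ux x m / v_y y m \<le> 2 powr (t + 2)}"
  have t: "0 < t" "\<epsilon> * t = c / \<epsilon> + 1"
    using c_pos eps_pos by (simp_all add: t_def add_pos_pos)
  have p: "0 < p x y" using good1 by simp
  have "0 < pXY P x y" using p good1_normalizations[OF good1] q_pos by (simp add: pXY_eq)
  note conds = conditionals[OF this]
  have S: "0 \<le> relent ?M (M_x x)" "0 \<le> relent ?M (M_y y)"
    "relent ?M (M_x x) + relent ?M (M_y y) \<le> c / \<epsilon>"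
    using relent_nonneg[OF conds(1,2,4)] relent_nonneg[OF conds(1,3,5)] good2 by auto
  have "t * sum ?M ?A1 \<le> t * \<epsilon>" "t * sum ?M ?A2 \<le> t * \<epsilon>"
    using conditional_tails[OF good1, of t] S t by (simp_all add: mult.commute)
  hence tails: "sum ?M ?A1 \<le> \<epsilon>" "sum ?M ?A2 \<le> \<epsilon>" using t(1) by (simp_all add: mult_le_cancel_left_pos)
  have M: "\<forall>m. 0 \<le> ?M m" "sum ?M UNIV = 1" using conds(1) by (simp_all add: is_distribution_def)
  have "sum ?M UNIV - sum ?M (?A1 \<union> ?A2)
      \<le> sum ?M {m. uy y m / v_x x m \<le> 2 powr (t + 2) \<and> ux x m / v_y y m \<le> 2 powr (t + 2)}"
    by (rule sum_ge_total_minus_exceptions[OF M(1)]) auto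
  moreover have "sum ?M (?A1 \<union> ?A2) \<le> sum ?M ?A1 + sum ?M ?A2" by (rule sum_Un_le[OF M(1)])
  moreover have "Delta = t + 2" by (simp add: t_def)
  ultimately show ?thesis using p tails M(2) by simp
qed

lemma good_pairs: "good1 \<inter> good2 \<subseteq> good"
proof (rule subsetI)
  fix z assume "z \<in> good1 \<inter> good2"
  thus "z \<in> good" using good_pair[of "fst z" "snd z"] by simp
qed

end

theorem mainTheorem6:
  fixes p :: "'x::finite \<Rightarrow> 'y::finite \<Rightarrow> real"
    and ux :: "'x \<Rightarrow> 'm::finite \<Rightarrow> real"
    and uy :: "'y \<Rightarrow> 'm \<Rightarrow> real"
    and P :: "'x \<Rightarrow> 'y \<Rightarrow> 'm \<Rightarrow> real"
    and c \<epsilon> :: real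
  defines "q \<equiv> (\<Sum>x\<in>UNIV. \<Sum>y\<in>UNIV. \<Sum>m\<in>UNIV. p x y * ux x m * uy y m)"
  defines "\<alpha>xy \<equiv> (\<lambda>x y. \<Sum>m\<in>UNIV. ux x m * uy y m)"
  defines "\<alpha>x \<equiv> (\<lambda>x. \<Sum>y\<in>UNIV. cond_y_x p x y * \<alpha>xy x y)"
  defines "\<alpha>y \<equiv> (\<lambda>y. \<Sum>x\<in>UNIV. cond_x_y p y x * \<alpha>xy x y)"
  defines "vx \<equiv> (\<lambda>x m. \<Sum>y\<in>UNIV. cond_y_x p x y * uy y m)"
  defines "vy \<equiv> (\<lambda>y m. \<Sum>x\<in>UNIV. cond_x_y p y x * ux x m)"
  defines "\<Delta> \<equiv> (c / \<epsilon> + 1) / \<epsilon> + 2"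
  defines "Mxy \<equiv> (\<lambda>x y m. P x y m / pXY P x y)"
  defines "Mx \<equiv> (\<lambda>x m. pXM P x m / pX P x)"
  defines "My \<equiv> (\<lambda>y m. pYM P y m / pY P y)"
  defines "G1 \<equiv> {(x, y). p x y > 0 \<and> \<bar>1 - \<alpha>xy x y / q\<bar> \<le> 1/2
                        \<and> \<bar>1 - \<alpha>x x / q\<bar> \<le> 1/2 \<and> \<bar>1 - \<alpha>y y / q\<bar> \<le> 1/2}"
  defines "G2 \<equiv> {(x, y). p x y > 0 \<and>
                  relent (Mxy x y) (Mx x) + relent (Mxy x y) (My y) \<le> c / \<epsilon>}"
  defines "G \<equiv> {(x, y). p x y > 0 \<and>
                  (\<Sum>m\<in>{m. uy y m / vx x m \<le> 2 powr \<Delta> \<and> ux x m / vy y m \<le> 2 powr \<Delta>}.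
                     Mxy x y m) \<ge> 1 - 2 * \<epsilon>}"
  assumes c_ge: "c \<ge> 1"
    and eps_pos: "0 < \<epsilon>" and eps_lt: "\<epsilon> < 1/3"
    and p_nonneg: "\<forall>x y. p x y \<ge> 0"
    and p_sum: "(\<Sum>x\<in>UNIV. \<Sum>y\<in>UNIV. p x y) = 1"
    and ux_range: "\<forall>x m. 0 \<le> ux x m \<and> ux x m \<le> 1"
    and uy_range: "\<forall>y m. 0 \<le> uy y m \<and> uy y m \<le> 1"
    and q_pos: "q > 0"
    and hyp1: "\<forall>x y m. P x y m = p x y * ux x m * uy y m / q"
    and hyp2: "relent (\<lambda>(x, y). pXY P x y) (\<lambda>(x, y). p x y) \<le> \<epsilon>\<^sup>2 / 4"
    and hyp3: "cmi_XM_Y P + cmi_YM_X P \<le> c"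
  shows "(\<Sum>(x, y)\<in>G1. p x y) > 1 - 6 * \<epsilon>
       \<and> (\<Sum>(x, y)\<in>G2. p x y) \<ge> 1 - 3 * \<epsilon> / 2
       \<and> (\<Sum>(x, y)\<in>G1 \<inter> G2. p x y) \<ge> 1 - 15 * \<epsilon> / 2
       \<and> G1 \<inter> G2 \<subseteq> G"
proof -
  interpret main_lemma p ux uy P q c \<epsilon>
    using p_nonneg p_sum ux_range uy_range q_pos hyp1 c_ge eps_pos hyp2 hyp3
    by unfold_locales (auto simp: q_def)
  show ?thesis
    unfolding G1_def G2_def G_def \<alpha>xy_def \<alpha>x_def \<alpha>y_def vx_def vy_def \<Delta>_def Mxy_def Mx_def My_def
    using good1_mass good2_mass good1_good2_mass good_pairs by blast
qed

end
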